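(* Let $\mathcal{F}^\mathcal{P}=(\mu_n,\mathcal{S}_n,L_n,\pi_n)_{n\ge1}$ be the family of product chains induced by $\mathcal{F}$ and $\mathcal{P}$. Then $\mathcal{F}^\mathcal{P}$ has an $L^2$-cutoff if and only if there is a sequence $t_n>0$ such that \[\lim_{n\to\infty}\sum_{i=1}^{\ell_n}d_{n,i,2}(\mu_{n,i},ap_{n,i}t_n)^2=\begin{cases}0,&a>1,\\ \infty,&0<a<1.\end{cases}\] Further, with $\mathcal{T}_n(\epsilon)=\min\{t\ge0:\sum_{i=1}^{\ell_n}d_{n,i,2}(\mu_{n,i},p_{n,i}t)^2\le\epsilon\}$, one has \[T_{n,2}(\mu_n,\sqrt{e^\epsilon-1})\le\mathcal{T}_n(\epsilon)\le T_{n,2}(\mu_n,\sqrt\epsilon)\quad\text{for all }\epsilon>0.\]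
   Context: $\mathcal{F}=\{(\mu_{n,i},\mathcal{S}_{n,i},L_{n,i},\pi_{n,i}):1\le i\le\ell_n,n\ge1\}$ is a triangular array of irreducible continuous-time finite Markov chains (initial distribution $\mu_{n,i}$, generator $L_{n,i}$, stationary distribution $\pi_{n,i}$), and $\mathcal{P}=\{p_{n,i}>0\}$ a triangular array with $\sum_{i=1}^{\ell_n}p_{n,i}\le1$. The product chain has $\mathcal{S}_n=\prod_i\mathcal{S}_{n,i}$, $\mu_n=\mu_{n,1}\times\dots\times\mu_{n,\ell_n}$, $\pi_n=\pi_{n,1}\times\dots\times\pi_{n,\ell_n}$ and $L_n=\sum_{i=1}^{\ell_n}p_{n,i}I_{n,1}\otimes\dots\otimes I_{n,i-1}\otimes L_{n,i}\otimes I_{n,i+1}\otimes\dots\otimes I_{n,\ell_n}$ ($I_{n,i}$ identity on $\mathcal{S}_{n,i}$). For a continuous-time chain, $d_2(\mu,t)=\big(\sum_y|\mu e^{tL}(y)/\pi(y)-1|^2\pi(y)\big)^{1/2}$; $d_{n,2}$, $d_{n,i,2}$ are these for the product chain and the $(n,i)$ component, and $T_{n,2}(\mu_n,\epsilon)=\min\{t\ge0:d_{n,2}(\mu_n,t)\le\epsilon\}$. $L^2$-cutoff: there is $t_n>0$ with $d_{n,2}(\mu_n,(1+a)t_n)\to0$ and $d_{n,2}(\mu_n,(1-a)t_n)\to\infty$ for all $a\in(0,1)$. *)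

theory Defs
  imports "HOL-Analysis.Analysis"
begin

text \<open>A generator (Q-matrix) on a finite nonempty state space S, given as a function
  on S x S; values outside S are irrelevant.\<close>
definition generator :: "'a set \<Rightarrow> ('a \<Rightarrow> 'a \<Rightarrow> real) \<Rightarrow> bool" where
  "generator S L \<longleftrightarrow> finite S \<and> S \<noteq> {} \<and>
     (\<forall>x\<in>S. \<forall>y\<in>S. x \<noteq> y \<longrightarrow> 0 \<le> L x y) \<and>
     (\<forall>x\<in>S. (\<Sum>y\<in>S. L x y) = 0)"

definition irreducible_gen :: "'a set \<Rightarrow> ('a \<Rightarrow> 'a \<Rightarrow> real) \<Rightarrow> bool" where
  "irreducible_gen S L \<longleftrightarrow>
     (\<forall>x\<in>S. \<forall>y\<in>S. (x, y) \<in> {(u, v). u \<in> S \<and> v \<in> S \<and> u \<noteq> v \<and> 0 < L u v}\<^sup>*)"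

definition prob_distr :: "'a set \<Rightarrow> ('a \<Rightarrow> real) \<Rightarrow> bool" where
  "prob_distr S \<mu> \<longleftrightarrow> (\<forall>x\<in>S. 0 \<le> \<mu> x) \<and> (\<Sum>x\<in>S. \<mu> x) = 1"

definition stationary :: "'a set \<Rightarrow> ('a \<Rightarrow> 'a \<Rightarrow> real) \<Rightarrow> ('a \<Rightarrow> real) \<Rightarrow> bool" where
  "stationary S L \<pi> \<longleftrightarrow> prob_distr S \<pi> \<and> (\<forall>y\<in>S. (\<Sum>x\<in>S. \<pi> x * L x y) = 0)"

definition finite_chain ::
  "('a \<Rightarrow> real) \<Rightarrow> 'a set \<Rightarrow> ('a \<Rightarrow> 'a \<Rightarrow> real) \<Rightarrow> ('a \<Rightarrow> real) \<Rightarrow> bool" where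
  "finite_chain \<mu> S L \<pi> \<longleftrightarrow> generator S L \<and> irreducible_gen S L \<and>
     prob_distr S \<mu> \<and> stationary S L \<pi>"

fun mpow :: "'a set \<Rightarrow> ('a \<Rightarrow> 'a \<Rightarrow> real) \<Rightarrow> nat \<Rightarrow> 'a \<Rightarrow> 'a \<Rightarrow> real" where
  "mpow S L 0 x y = (if x = y then 1 else 0)"
| "mpow S L (Suc k) x y = (\<Sum>z\<in>S. L x z * mpow S L k z y)"

definition heat :: "'a set \<Rightarrow> ('a \<Rightarrow> 'a \<Rightarrow> real) \<Rightarrow> real \<Rightarrow> 'a \<Rightarrow> 'a \<Rightarrow> real" where
  "heat S L t x y = (\<Sum>k. t ^ k / fact k * mpow S L k x y)"

definition d2 :: "'a set \<Rightarrow> ('a \<Rightarrow> 'a \<Rightarrow> real) \<Rightarrow> ('a \<Rightarrow> real) \<Rightarrow> ('a \<Rightarrow> real) \<Rightarrow> real \<Rightarrow> real" where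
  "d2 S L \<pi> \<mu> t =
     sqrt (\<Sum>y\<in>S. ((\<Sum>x\<in>S. \<mu> x * heat S L t x y) / \<pi> y - 1)\<^sup>2 * \<pi> y)"

definition prod_space :: "nat set \<Rightarrow> (nat \<Rightarrow> 'a set) \<Rightarrow> (nat \<Rightarrow> 'a) set" where
  "prod_space I S = PiE I S"

definition prod_distr :: "nat set \<Rightarrow> (nat \<Rightarrow> 'a \<Rightarrow> real) \<Rightarrow> (nat \<Rightarrow> 'a) \<Rightarrow> real" where
  "prod_distr I \<mu> x = (\<Prod>i\<in>I. \<mu> i (x i))"

text \<open>Entries of sum_i p_i I x ... x L_i x ... x I.\<close>
definition prod_gen :: "nat set \<Rightarrow> (nat \<Rightarrow> real) \<Rightarrow> (nat \<Rightarrow> 'a \<Rightarrow> 'a \<Rightarrow> real)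
    \<Rightarrow> (nat \<Rightarrow> 'a) \<Rightarrow> (nat \<Rightarrow> 'a) \<Rightarrow> real" where
  "prod_gen I p L x y =
     (\<Sum>i\<in>I. p i * (if (\<forall>j\<in>I - {i}. x j = y j) then L i (x i) (y i) else 0))"

definition L2_cutoff :: "(nat \<Rightarrow> real \<Rightarrow> real) \<Rightarrow> bool" where
  "L2_cutoff d \<longleftrightarrow> (\<exists>tn :: nat \<Rightarrow> real. (\<forall>n. 0 < tn n) \<and>
     (\<forall>a. 0 < a \<and> a < 1 \<longrightarrow>
        ((\<lambda>n. d n ((1 + a) * tn n)) \<longlonglongrightarrow> 0) \<and>
        filterlim (\<lambda>n. d n ((1 - a) * tn n)) at_top sequentially))"

text \<open>min {t >= 0. f t <= eps} (rendered as infimum; the set is closed and nonempty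
  in the situation of interest, so this is the minimum).\<close>
definition mix_time :: "(real \<Rightarrow> real) \<Rightarrow> real \<Rightarrow> real" where
  "mix_time f \<epsilon> = Inf {t. 0 \<le> t \<and> f t \<le> \<epsilon>}"

end

theory Submission
  imports Defs
begin

text \<open>The generators of distinct coordinates commute, and \<open>exp (A + B) = exp A * exp B\<close> for
  commuting \<open>A\<close> and \<open>B\<close>; hence the heat kernel of the product chain at time \<open>t\<close> is the tensor
  product of the component heat kernels at times \<open>p i * t\<close>. Since \<open>1 + \<chi>\<^sup>2\<close> is multiplicative
  over product measures, \<open>1 + d(t)\<^sup>2 = (\<Prod>i. 1 + d\<^sub>i(p i * t)\<^sup>2)\<close>, so that
  \<open>D(t) \<le> d(t)\<^sup>2 \<le> exp D(t) - 1\<close> with \<open>D(t) = (\<Sum>i. d\<^sub>i(p i * t)\<^sup>2)\<close>. Both claims follow from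
  these two inequalities and two properties of each component: its \<open>\<chi>\<^sup>2\<close>-distance to
  stationarity is nonincreasing in time (Cauchy-Schwarz) and tends to 0 (Doeblin's argument,
  which is where irreducibility enters).\<close>

section \<open>Matrix exponential on a finite set\<close>

definition mat_mult ::
  "'a set \<Rightarrow> ('a \<Rightarrow> 'a \<Rightarrow> real) \<Rightarrow> ('a \<Rightarrow> 'a \<Rightarrow> real) \<Rightarrow> 'a \<Rightarrow> 'a \<Rightarrow> real" where
  "mat_mult S A B x y = (\<Sum>z\<in>S. A x z * B z y)"

definition mat_exp :: "'a set \<Rightarrow> ('a \<Rightarrow> 'a \<Rightarrow> real) \<Rightarrow> 'a \<Rightarrow> 'a \<Rightarrow> real" where
  "mat_exp S A x y = (\<Sum>k. mpow S A k x y / fact k)"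

definition scalar_mat :: "real \<Rightarrow> 'a \<Rightarrow> 'a \<Rightarrow> real" where
  "scalar_mat c x y = (if x = y then c else 0)"

lemma mpow_Suc_mat_mult: "mpow S A (Suc k) = mat_mult S A (mpow S A k)"
  by (simp add: fun_eq_iff mat_mult_def)

lemma mpow_0_scalar_mat: "mpow S A 0 = scalar_mat 1"
  by (simp add: fun_eq_iff scalar_mat_def)

lemma mat_mult_cong:
  "(\<And>z. z \<in> S \<Longrightarrow> A x z = A' x z) \<Longrightarrow> (\<And>z. z \<in> S \<Longrightarrow> B z y = B' z y) \<Longrightarrow>
   mat_mult S A B x y = mat_mult S A' B' x y"
  unfolding mat_mult_def by simp

lemma mat_mult_assoc:
  assumes "finite S"
  shows "mat_mult S (mat_mult S A B) C x y = mat_mult S A (mat_mult S B C) x y"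
proof -
  have "mat_mult S (mat_mult S A B) C x y = (\<Sum>z\<in>S. \<Sum>w\<in>S. A x w * (B w z * C z y))"
    unfolding mat_mult_def by (simp add: sum_distrib_right mult.assoc)
  also have "\<dots> = (\<Sum>w\<in>S. \<Sum>z\<in>S. A x w * (B w z * C z y))"
    by (rule sum.swap)
  also have "\<dots> = mat_mult S A (mat_mult S B C) x y"
    unfolding mat_mult_def by (simp add: sum_distrib_left)
  finally show ?thesis .
qed

lemma mat_mult_sum_left:
  "mat_mult S (\<lambda>u v. \<Sum>j\<in>J. B j u v) A x y = (\<Sum>j\<in>J. mat_mult S (B j) A x y)"
  unfolding mat_mult_def by (simp add: sum_distrib_right) (rule sum.swap)

lemma mat_mult_sum_right:
  "mat_mult S A (\<lambda>u v. \<Sum>j\<in>J. B j u v) x y = (\<Sum>j\<in>J. mat_mult S A (B j) x y)"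
  unfolding mat_mult_def by (simp add: sum_distrib_left) (rule sum.swap)

lemma mat_mult_scalar_left:
  "finite S \<Longrightarrow> x \<in> S \<Longrightarrow> mat_mult S (scalar_mat c) A x y = c * A x y"
  by (simp add: mat_mult_def scalar_mat_def if_distrib if_distribR cong: if_cong)

lemma mat_mult_scalar_right:
  "finite S \<Longrightarrow> y \<in> S \<Longrightarrow> mat_mult S A (scalar_mat c) x y = c * A x y"
  by (simp add: mat_mult_def scalar_mat_def if_distrib if_distribR mult.commute cong: if_cong)

lemma mpow_scalar_mat:
  "finite S \<Longrightarrow> x \<in> S \<Longrightarrow> mpow S (scalar_mat c) k x y = scalar_mat (c ^ k) x y"
  by (induction k arbitrary: x) (auto simp: scalar_mat_def if_distrib if_distribR cong: if_cong)

lemma mpow_scale: "mpow S (\<lambda>x y. t * A x y) k x y = t ^ k * mpow S A k x y"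
  by (induction k arbitrary: x) (auto simp: sum_distrib_left mult_ac)

lemma mpow_abs_le:
  assumes "finite S" "x \<in> S"
  shows "\<bar>mpow S A k x y\<bar> \<le> (\<Sum>u\<in>S. \<Sum>z\<in>S. \<bar>A u z\<bar>) ^ k"
  using assms(2)
proof (induction k arbitrary: x)
  case 0
  then show ?case by simp
next
  case (Suc k)
  let ?B = "\<Sum>u\<in>S. \<Sum>z\<in>S. \<bar>A u z\<bar>"
  have "\<bar>mpow S A (Suc k) x y\<bar> \<le> (\<Sum>z\<in>S. \<bar>A x z\<bar> * \<bar>mpow S A k z y\<bar>)"
    using sum_abs[of "\<lambda>z. A x z * mpow S A k z y" S] by (simp add: abs_mult)
  also have "\<dots> \<le> (\<Sum>z\<in>S. \<bar>A x z\<bar>) * ?B ^ k"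
    by (auto simp: sum_distrib_right intro!: sum_mono mult_left_mono Suc.IH)
  also have "\<dots> \<le> ?B * ?B ^ k"
    using Suc.prems assms(1)
    by (intro mult_right_mono zero_le_power member_le_sum[of x _ "\<lambda>u. \<Sum>z\<in>S. \<bar>A u z\<bar>"])
       (auto intro: sum_nonneg)
  finally show ?case by simp
qed

lemma summable_mat_exp_series:
  assumes "finite S" "x \<in> S"
  shows "summable (\<lambda>k. norm (mpow S A k x y / fact k))"
proof (rule summable_comparison_test[OF _ summable_exp[of "\<Sum>u\<in>S. \<Sum>z\<in>S. \<bar>A u z\<bar>"]])
  show "\<exists>N. \<forall>k\<ge>N. norm (norm (mpow S A k x y / fact k))
          \<le> inverse (fact k) * (\<Sum>u\<in>S. \<Sum>z\<in>S. \<bar>A u z\<bar>) ^ k"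
    by (auto simp: abs_mult divide_inverse mult.commute intro!: mult_left_mono mpow_abs_le assms)
qed

lemma sums_mat_exp: "finite S \<Longrightarrow> x \<in> S \<Longrightarrow> (\<lambda>k. mpow S A k x y / fact k) sums mat_exp S A x y"
  unfolding mat_exp_def by (rule summable_sums, rule summable_norm_cancel, rule summable_mat_exp_series)

lemma mat_exp_scalar_mat:
  assumes "finite S" "x \<in> S"
  shows "mat_exp S (scalar_mat c) x y = scalar_mat (exp c) x y"
proof -
  have "(\<lambda>k. mpow S (scalar_mat c) k x y / fact k) = (\<lambda>k. scalar_mat 1 x y * (c ^ k /\<^sub>R fact k))"
    using assms by (auto simp: mpow_scalar_mat scalar_mat_def divide_inverse scaleR_conv_of_real)
  moreover have "(\<lambda>k. scalar_mat 1 x y * (c ^ k /\<^sub>R fact k)) sums (scalar_mat 1 x y * exp c)"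
    by (rule sums_mult[OF exp_converges])
  ultimately show ?thesis
    unfolding mat_exp_def by (simp add: sums_iff scalar_mat_def)
qed

lemma mat_mult_commute_mpow:
  assumes fin: "finite S"
    and comm: "\<And>u v. u \<in> S \<Longrightarrow> v \<in> S \<Longrightarrow> mat_mult S A B u v = mat_mult S B A u v"
    and "u \<in> S" "v \<in> S"
  shows "mat_mult S B (mpow S A k) u v = mat_mult S (mpow S A k) B u v"
  using assms(3,4)
proof (induction k arbitrary: u v)
  case 0
  then show ?case by (simp add: fin mpow_0_scalar_mat mat_mult_scalar_left mat_mult_scalar_right)
next
  case (Suc k)
  have "mat_mult S B (mpow S A (Suc k)) u v = mat_mult S (mat_mult S B A) (mpow S A k) u v"
    by (simp add: mpow_Suc_mat_mult mat_mult_assoc fin)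
  also have "\<dots> = mat_mult S (mat_mult S A B) (mpow S A k) u v"
    using comm Suc.prems by (rule_tac mat_mult_cong) auto
  also have "\<dots> = mat_mult S A (mat_mult S (mpow S A k) B) u v"
    using Suc.IH Suc.prems by (simp add: mat_mult_assoc fin) (rule mat_mult_cong, auto)
  also have "\<dots> = mat_mult S (mpow S A (Suc k)) B u v"
    by (simp add: mpow_Suc_mat_mult mat_mult_assoc fin)
  finally show ?case .
qed

lemma sum_choose_pascal:
  fixes X :: "nat \<Rightarrow> nat \<Rightarrow> real"
  shows "(\<Sum>k\<le>n. real (n choose k) * (X (Suc k) (n - k) + X k (Suc (n - k)))) =
         (\<Sum>k\<le>Suc n. real (Suc n choose k) * X k (Suc n - k))"
proof -
  define f where "f k = X k (Suc n - k)" for k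
  have "(\<Sum>k\<le>n. real (n choose k) * (X (Suc k) (n - k) + X k (Suc (n - k)))) =
        (\<Sum>k\<le>n. real (n choose k) * f (Suc k)) + (\<Sum>k\<le>Suc n. real (n choose k) * f k)"
    unfolding f_def
    by (auto simp: sum.distrib[symmetric] algebra_simps Suc_diff_le intro!: sum.cong)
  also have "(\<Sum>k\<le>Suc n. real (n choose k) * f k) = f 0 + (\<Sum>k\<le>n. real (n choose Suc k) * f (Suc k))"
    by (simp only: sum.atMost_Suc_shift binomial_n_0 of_nat_1 mult_1)
  also have "(\<Sum>k\<le>n. real (n choose k) * f (Suc k)) + \<dots> =
             real (Suc n choose 0) * f 0 + (\<Sum>k\<le>n. real (Suc n choose Suc k) * f (Suc k))"
    by (simp add: sum.distrib algebra_simps)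
  also have "\<dots> = (\<Sum>k\<le>Suc n. real (Suc n choose k) * f k)"
    by (simp only: sum.atMost_Suc_shift)
  finally show ?thesis unfolding f_def .
qed

lemma mpow_add_binomial:
  assumes fin: "finite S"
    and comm: "\<And>u v. u \<in> S \<Longrightarrow> v \<in> S \<Longrightarrow> mat_mult S A B u v = mat_mult S B A u v"
    and "x \<in> S" "y \<in> S"
  shows "mpow S (\<lambda>u v. A u v + B u v) n x y =
         (\<Sum>k\<le>n. real (n choose k) * mat_mult S (mpow S A k) (mpow S B (n - k)) x y)"
  using assms(3)
proof (induction n arbitrary: x)
  case 0
  then show ?case by (simp add: fin mpow_0_scalar_mat mat_mult_scalar_left)
next
  case (Suc n)
  define M where "M k m = mat_mult S (mpow S A k) (mpow S B m)" for k m
  have A_step: "mat_mult S A (M k m) x y = M (Suc k) m x y" for k m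
    unfolding M_def by (simp add: mat_mult_assoc[OF fin, symmetric] mpow_Suc_mat_mult[symmetric]
        cong: mat_mult_cong)
  have B_step: "mat_mult S B (M k m) x y = M k (Suc m) x y" for k m
  proof -
    have "mat_mult S B (M k m) x y = mat_mult S (mat_mult S B (mpow S A k)) (mpow S B m) x y"
      unfolding M_def by (simp add: mat_mult_assoc[OF fin])
    also have "\<dots> = mat_mult S (mat_mult S (mpow S A k) B) (mpow S B m) x y"
      using mat_mult_commute_mpow[OF fin comm] Suc.prems by (rule_tac mat_mult_cong) auto
    also have "\<dots> = M k (Suc m) x y"
      unfolding M_def by (simp add: mat_mult_assoc[OF fin] mpow_Suc_mat_mult[symmetric]
          cong: mat_mult_cong)
    finally show ?thesis .
  qed
  have "mpow S (\<lambda>u v. A u v + B u v) (Suc n) x y =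
        mat_mult S (\<lambda>u v. A u v + B u v) (\<lambda>u v. \<Sum>k\<le>n. real (n choose k) * M k (n - k) u v) x y"
    unfolding mpow_Suc_mat_mult M_def by (rule mat_mult_cong) (simp_all add: Suc.IH)
  also have "\<dots> = (\<Sum>k\<le>n. real (n choose k) *
                   (mat_mult S A (M k (n - k)) x y + mat_mult S B (M k (n - k)) x y))"
    by (simp add: mat_mult_sum_right) (simp add: mat_mult_def algebra_simps sum.distrib
        sum_distrib_left)
  also have "\<dots> = (\<Sum>k\<le>n. real (n choose k) * (M (Suc k) (n - k) x y + M k (Suc (n - k)) x y))"
    by (simp add: A_step B_step)
  also have "\<dots> = (\<Sum>k\<le>Suc n. real (Suc n choose k) * M k (Suc n - k) x y)"
    by (rule sum_choose_pascal)
  finally show ?case unfolding M_def .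
qed

lemma mat_exp_add:
  assumes fin: "finite S"
    and comm: "\<And>u v. u \<in> S \<Longrightarrow> v \<in> S \<Longrightarrow> mat_mult S A B u v = mat_mult S B A u v"
    and x: "x \<in> S" and y: "y \<in> S"
  shows "mat_exp S (\<lambda>u v. A u v + B u v) x y = mat_mult S (mat_exp S A) (mat_exp S B) x y"
proof -
  let ?a = "\<lambda>z i. mpow S A i x z / fact i" and ?b = "\<lambda>z j. mpow S B j z y / fact j"
  have "(\<lambda>n. \<Sum>z\<in>S. \<Sum>i\<le>n. ?a z i * ?b z (n - i)) sums mat_mult S (mat_exp S A) (mat_exp S B) x y"
    unfolding mat_mult_def mat_exp_def
    by (intro sums_sum Cauchy_product_sums summable_mat_exp_series fin x)
  moreover have "(\<Sum>z\<in>S. \<Sum>i\<le>n. ?a z i * ?b z (n - i)) =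
                 mpow S (\<lambda>u v. A u v + B u v) n x y / fact n" for n
  proof -
    have "(\<Sum>z\<in>S. \<Sum>i\<le>n. ?a z i * ?b z (n - i)) =
          (\<Sum>i\<le>n. mat_mult S (mpow S A i) (mpow S B (n - i)) x y / (fact i * fact (n - i)))"
      unfolding mat_mult_def by (subst sum.swap) (simp add: sum_divide_distrib)
    also have "\<dots> = (\<Sum>i\<le>n. real (n choose i) * mat_mult S (mpow S A i) (mpow S B (n - i)) x y)
                    / fact n"
      by (simp add: sum_divide_distrib binomial_fact)
    finally show ?thesis by (simp add: mpow_add_binomial[OF fin comm x y])
  qed
  ultimately show ?thesis
    unfolding mat_exp_def[of S "\<lambda>u v. A u v + B u v"] by (simp add: sums_iff)
qed

section \<open>Heat kernels of irreducible generators\<close>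

lemma heat_eq_mat_exp: "heat S L t x y = mat_exp S (\<lambda>u v. t * L u v) x y"
  unfolding heat_def mat_exp_def by (simp add: mpow_scale)

lemma generatorD:
  assumes "generator S L"
  shows "finite S" "S \<noteq> {}" "\<And>x y. x \<in> S \<Longrightarrow> y \<in> S \<Longrightarrow> x \<noteq> y \<Longrightarrow> 0 \<le> L x y"
    "\<And>x. x \<in> S \<Longrightarrow> (\<Sum>y\<in>S. L x y) = 0"
  using assms unfolding generator_def by auto

lemma stationaryD:
  assumes "stationary S L \<pi>"
  shows "\<And>x. x \<in> S \<Longrightarrow> 0 \<le> \<pi> x" "(\<Sum>x\<in>S. \<pi> x) = 1"
    "\<And>y. y \<in> S \<Longrightarrow> (\<Sum>x\<in>S. \<pi> x * L x y) = 0"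
  using assms unfolding stationary_def prob_distr_def by auto

lemma mpow_nonneg:
  assumes "\<And>u v. u \<in> S \<Longrightarrow> v \<in> S \<Longrightarrow> 0 \<le> A u v" "x \<in> S" "y \<in> S"
  shows "0 \<le> mpow S A k x y"
  using assms(2) by (induction k arbitrary: x) (simp_all add: sum_nonneg assms(1,3))

lemma mat_exp_nonneg:
  assumes "finite S" "\<And>u v. u \<in> S \<Longrightarrow> v \<in> S \<Longrightarrow> 0 \<le> A u v" "x \<in> S" "y \<in> S"
  shows "0 \<le> mat_exp S A x y"
  unfolding mat_exp_def
  using sums_mat_exp[OF assms(1,3), of A y] mpow_nonneg[of S A, OF assms(2-4)]
  by (intro suminf_nonneg) (simp_all add: sums_iff)

text \<open>For large \<open>c\<close> the matrix \<open>L + c I\<close> is entrywise nonnegative, so this transfers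
  nonnegativity and positivity of matrix powers to the heat kernel.\<close>

lemma heat_shift:
  assumes "finite S" "x \<in> S" "y \<in> S"
  shows "heat S L t x y = exp (- (t * c)) * mat_exp S (\<lambda>u v. t * (L u v + scalar_mat c u v)) x y"
proof -
  let ?A = "\<lambda>u v. t * (L u v + scalar_mat c u v)"
  have "heat S L t x y = mat_exp S (\<lambda>u v. ?A u v + scalar_mat (- (t * c)) u v) x y"
    unfolding heat_eq_mat_exp
    by (rule arg_cong[where f = "\<lambda>A. mat_exp S A x y"], intro ext) (simp add: scalar_mat_def algebra_simps)
  also have "\<dots> = mat_mult S (mat_exp S ?A) (mat_exp S (scalar_mat (- (t * c)))) x y"
    using assms by (intro mat_exp_add) (simp_all add: mat_mult_scalar_left mat_mult_scalar_right)
  also have "\<dots> = exp (- (t * c)) * mat_exp S ?A x y"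
    using assms
    by (simp add: mat_exp_scalar_mat mat_mult_scalar_right cong: mat_mult_cong)
  finally show ?thesis .
qed

lemma heat_nonneg:
  assumes gen: "generator S L" and "0 \<le> t" "x \<in> S" "y \<in> S"
  shows "0 \<le> heat S L t x y"
proof -
  let ?c = "\<Sum>u\<in>S. \<bar>L u u\<bar>"
  have "0 \<le> t * (L u v + scalar_mat ?c u v)" if "u \<in> S" "v \<in> S" for u v
  proof (cases "u = v")
    case True
    have "\<bar>L u u\<bar> \<le> ?c"
      using that generatorD(1)[OF gen] by (intro member_le_sum) auto
    then show ?thesis using True \<open>0 \<le> t\<close> by (simp add: scalar_mat_def)
  next
    case False
    then show ?thesis using generatorD(3)[OF gen that] \<open>0 \<le> t\<close> by (simp add: scalar_mat_def)
  qed
  then show ?thesis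
    using assms generatorD(1)[OF gen]
    by (subst heat_shift[where c = ?c]) (simp_all add: mat_exp_nonneg)
qed

lemma mpow_row_sum:
  assumes "finite S" "\<And>u. u \<in> S \<Longrightarrow> (\<Sum>v\<in>S. A u v) = 0" "x \<in> S"
  shows "(\<Sum>y\<in>S. mpow S A k x y) = (if k = 0 then 1 else 0)"
  using assms(3)
proof (induction k arbitrary: x)
  case 0
  then show ?case using assms(1) by simp
next
  case (Suc k)
  have "(\<Sum>y\<in>S. mpow S A (Suc k) x y) = (\<Sum>z\<in>S. A x z * (\<Sum>y\<in>S. mpow S A k z y))"
    by (simp add: sum_distrib_left) (rule sum.swap)
  also have "\<dots> = 0"
    using Suc assms(2)[OF Suc.prems] by (simp add: sum_distrib_right[symmetric])
  finally show ?case by simp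
qed

lemma mpow_left_null:
  assumes "\<And>v. v \<in> S \<Longrightarrow> (\<Sum>u\<in>S. p u * A u v) = 0" "y \<in> S"
  shows "(\<Sum>x\<in>S. p x * mpow S A (Suc k) x y) = 0"
proof -
  have "(\<Sum>x\<in>S. p x * mpow S A (Suc k) x y) = (\<Sum>z\<in>S. (\<Sum>x\<in>S. p x * A x z) * mpow S A k z y)"
    by (simp add: sum_distrib_left sum_distrib_right mult.assoc) (rule sum.swap)
  then show ?thesis by (simp add: assms)
qed

lemma heat_row_sum:
  assumes gen: "generator S L" and "x \<in> S"
  shows "(\<Sum>y\<in>S. heat S L t x y) = 1"
proof -
  have fin: "finite S" by (rule generatorD(1)[OF gen])
  have "(\<lambda>k. \<Sum>y\<in>S. mpow S (\<lambda>u v. t * L u v) k x y / fact k) sums (\<Sum>y\<in>S. heat S L t x y)"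
    unfolding heat_eq_mat_exp by (intro sums_sum sums_mat_exp fin assms)
  moreover have "(\<Sum>y\<in>S. mpow S (\<lambda>u v. t * L u v) k x y / fact k) = (if k = 0 then 1 else 0)" for k
    using mpow_row_sum[OF fin, of "\<lambda>u v. t * L u v" x k] generatorD(4)[OF gen] assms(2)
    by (simp add: sum_divide_distrib[symmetric] sum_distrib_left[symmetric])
  ultimately have "(\<lambda>k::nat. if k = 0 then 1 else 0) sums (\<Sum>y\<in>S. heat S L t x y)"
    by simp
  from sums_unique2[OF this sums_single[of 0 "\<lambda>_. 1", simplified]] show ?thesis .
qed

lemma heat_stationary:
  assumes gen: "generator S L" and st: "stationary S L \<pi>" and "y \<in> S"
  shows "(\<Sum>x\<in>S. \<pi> x * heat S L t x y) = \<pi> y"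
proof -
  have fin: "finite S" by (rule generatorD(1)[OF gen])
  have "(\<lambda>k. \<Sum>x\<in>S. \<pi> x * (mpow S (\<lambda>u v. t * L u v) k x y / fact k))
          sums (\<Sum>x\<in>S. \<pi> x * heat S L t x y)"
    unfolding heat_eq_mat_exp by (intro sums_sum sums_mult sums_mat_exp fin) auto
  moreover have "(\<Sum>x\<in>S. \<pi> x * (mpow S (\<lambda>u v. t * L u v) k x y / fact k)) =
                 (if k = 0 then \<pi> y else 0)" for k
  proof (cases k)
    case 0
    then show ?thesis using fin assms(3) by (simp add: if_distrib if_distribR cong: if_cong)
  next
    case (Suc m)
    have "(\<Sum>u\<in>S. \<pi> u * (t * L u v)) = 0" if "v \<in> S" for v
      using stationaryD(3)[OF st that] by (simp add: mult.left_commute sum_distrib_left[symmetric])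
    then have "(\<Sum>x\<in>S. \<pi> x * mpow S (\<lambda>u v. t * L u v) k x y) = 0"
      using mpow_left_null[of S \<pi> "\<lambda>u v. t * L u v" y m] assms(3) Suc by simp
    then show ?thesis
      using Suc by (simp add: sum_divide_distrib[symmetric])
  qed
  ultimately have "(\<lambda>k::nat. if k = 0 then \<pi> y else 0) sums (\<Sum>x\<in>S. \<pi> x * heat S L t x y)"
    by simp
  from sums_unique2[OF this sums_single[of 0 "\<lambda>_. \<pi> y", simplified]] show ?thesis .
qed

lemma heat_add:
  assumes "generator S L" "x \<in> S" "y \<in> S"
  shows "heat S L (t + s) x y = (\<Sum>z\<in>S. heat S L t x z * heat S L s z y)"
proof -
  have "heat S L (t + s) x y = mat_exp S (\<lambda>u v. t * L u v + s * L u v) x y"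
    unfolding heat_eq_mat_exp by (simp add: distrib_right)
  also have "\<dots> = mat_mult S (mat_exp S (\<lambda>u v. t * L u v)) (mat_exp S (\<lambda>u v. s * L u v)) x y"
    using assms generatorD(1)
    by (intro mat_exp_add) (simp_all add: mat_mult_def sum_distrib_left mult_ac)
  finally show ?thesis unfolding mat_mult_def heat_eq_mat_exp .
qed

lemma mpow_pos_of_path:
  assumes fin: "finite S" and nonneg: "\<And>u v. u \<in> S \<Longrightarrow> v \<in> S \<Longrightarrow> 0 \<le> A u v"
    and path: "(x, y) \<in> {(u, v). u \<in> S \<and> v \<in> S \<and> 0 < A u v}\<^sup>*"
    and "x \<in> S" "y \<in> S"
  shows "\<exists>k. 0 < mpow S A k x y"
  using path assms(4,5)
proof (induction rule: converse_rtrancl_induct)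
  case base
  then show ?case by (intro exI[of _ 0]) simp
next
  case (step x w)
  then have w: "w \<in> S" "0 < A x w" by auto
  obtain k where k: "0 < mpow S A k w y" using step by auto
  have "A x w * mpow S A k w y \<le> (\<Sum>z\<in>S. A x z * mpow S A k z y)"
    using step.prems w fin
    by (intro member_le_sum mult_nonneg_nonneg nonneg mpow_nonneg) auto
  moreover have "0 < A x w * mpow S A k w y" using w k by simp
  ultimately have "0 < mpow S A (Suc k) x y" by simp
  then show ?case by blast
qed

lemma heat_pos:
  assumes gen: "generator S L" and irr: "irreducible_gen S L" and "0 < t" "x \<in> S" "y \<in> S"
  shows "0 < heat S L t x y"
proof -
  have fin: "finite S" by (rule generatorD(1)[OF gen])
  define A where "A u v = t * (L u v + scalar_mat (1 + (\<Sum>w\<in>S. \<bar>L w w\<bar>)) u v)" for u v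
  have diag: "\<bar>L u u\<bar> < 1 + (\<Sum>w\<in>S. \<bar>L w w\<bar>)" if "u \<in> S" for u
    using member_le_sum[of u S "\<lambda>w. \<bar>L w w\<bar>"] that fin by simp
  have nonneg: "0 \<le> A u v" if "u \<in> S" "v \<in> S" for u v
    using diag[OF that(1)] generatorD(3)[OF gen that] \<open>0 < t\<close>
    by (cases "u = v") (auto simp: A_def scalar_mat_def intro!: mult_nonneg_nonneg)
  have "{(u, v). u \<in> S \<and> v \<in> S \<and> u \<noteq> v \<and> 0 < L u v} \<subseteq> {(u, v). u \<in> S \<and> v \<in> S \<and> 0 < A u v}"
    using \<open>0 < t\<close> by (auto simp: A_def scalar_mat_def)
  then have "(x, y) \<in> {(u, v). u \<in> S \<and> v \<in> S \<and> 0 < A u v}\<^sup>*"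
    using irr assms(4,5) rtrancl_mono unfolding irreducible_gen_def by blast
  then obtain k where k: "0 < mpow S A k x y"
    using mpow_pos_of_path[of S A, OF fin nonneg] assms(4,5) by blast
  have "mpow S A k x y / fact k \<le> mat_exp S A x y"
    using sum_le_suminf[of "\<lambda>j. mpow S A j x y / fact j" "{k}"] sums_mat_exp[OF fin assms(4), of A y]
      mpow_nonneg[of S A, OF nonneg assms(4,5)]
    by (simp add: sums_iff)
  moreover have "0 < mpow S A k x y / fact k"
    using k by simp
  ultimately have "0 < mat_exp S A x y"
    by linarith
  then show ?thesis
    unfolding heat_shift[OF fin assms(4,5), where c = "1 + (\<Sum>w\<in>S. \<bar>L w w\<bar>)"] A_def by simp
qed

lemma stationary_pos:
  assumes gen: "generator S L" and irr: "irreducible_gen S L" and st: "stationary S L \<pi>"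
    and "y \<in> S"
  shows "0 < \<pi> y"
proof -
  have fin: "finite S" by (rule generatorD(1)[OF gen])
  have "\<exists>w\<in>S. 0 < \<pi> w"
    using stationaryD(2)[OF st] sum_nonpos[of S \<pi>] by (rule_tac ccontr) (auto simp: not_less)
  then obtain w where w: "w \<in> S" "0 < \<pi> w" ..
  have "\<pi> w * heat S L 1 w y \<le> (\<Sum>x\<in>S. \<pi> x * heat S L 1 x y)"
    using w assms(4) fin
    by (intro member_le_sum) (auto intro!: mult_nonneg_nonneg stationaryD(1)[OF st] heat_nonneg gen)
  moreover have "0 < \<pi> w * heat S L 1 w y"
    using w heat_pos[OF gen irr _ w(1) assms(4)] by simp
  ultimately show ?thesis using heat_stationary[OF gen st assms(4)] by simp
qed

section \<open>Chi-square distance to stationarity\<close>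

definition distr_at :: "'a set \<Rightarrow> ('a \<Rightarrow> 'a \<Rightarrow> real) \<Rightarrow> ('a \<Rightarrow> real) \<Rightarrow> real \<Rightarrow> 'a \<Rightarrow> real" where
  "distr_at S L \<mu> t y = (\<Sum>x\<in>S. \<mu> x * heat S L t x y)"

definition chi2_dist :: "'a set \<Rightarrow> ('a \<Rightarrow> real) \<Rightarrow> ('a \<Rightarrow> real) \<Rightarrow> real" where
  "chi2_dist S \<pi> \<nu> = (\<Sum>y\<in>S. (\<nu> y - \<pi> y)\<^sup>2 / \<pi> y)"

lemma finite_chainD:
  assumes "finite_chain \<mu> S L \<pi>"
  shows "generator S L" "stationary S L \<pi>" "finite S" "S \<noteq> {}"
    "\<And>x. x \<in> S \<Longrightarrow> 0 \<le> \<mu> x" "(\<Sum>x\<in>S. \<mu> x) = 1" "\<And>y. y \<in> S \<Longrightarrow> 0 < \<pi> y"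
  using assms generatorD stationary_pos
  unfolding finite_chain_def prob_distr_def by auto

lemma d2_eq_sqrt_chi2_dist:
  assumes "\<And>y. y \<in> S \<Longrightarrow> 0 < \<pi> y"
  shows "d2 S L \<pi> \<mu> t = sqrt (chi2_dist S \<pi> (distr_at S L \<mu> t))"
  unfolding d2_def chi2_dist_def distr_at_def
  using assms
  by (intro arg_cong[where f = sqrt] sum.cong refl) (simp add: field_simps power2_eq_square)

lemma chi2_dist_nonneg: "(\<And>y. y \<in> S \<Longrightarrow> 0 < \<pi> y) \<Longrightarrow> 0 \<le> chi2_dist S \<pi> \<nu>"
  unfolding chi2_dist_def by (intro sum_nonneg divide_nonneg_pos) auto

lemma d2_nonneg: "(\<And>y. y \<in> S \<Longrightarrow> 0 \<le> \<pi> y) \<Longrightarrow> 0 \<le> d2 S L \<pi> \<mu> t"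
  unfolding d2_def by (simp add: sum_nonneg)

lemma d2_sq:
  assumes "\<And>y. y \<in> S \<Longrightarrow> 0 < \<pi> y"
  shows "(d2 S L \<pi> \<mu> t)\<^sup>2 = chi2_dist S \<pi> (distr_at S L \<mu> t)"
  using chi2_dist_nonneg[OF assms] by (simp add: d2_eq_sqrt_chi2_dist[OF assms])

lemma sum_distr_at:
  assumes "finite_chain \<mu> S L \<pi>"
  shows "(\<Sum>y\<in>S. distr_at S L \<mu> t y) = 1"
proof -
  have "(\<Sum>y\<in>S. distr_at S L \<mu> t y) = (\<Sum>x\<in>S. \<mu> x * (\<Sum>y\<in>S. heat S L t x y))"
    unfolding distr_at_def by (simp add: sum_distrib_left) (rule sum.swap)
  then show ?thesis
    using finite_chainD(6)[OF assms] heat_row_sum[OF finite_chainD(1)[OF assms]] by simp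
qed

lemma distr_at_add:
  assumes "generator S L" "y \<in> S"
  shows "distr_at S L \<mu> (t + s) y = (\<Sum>z\<in>S. distr_at S L \<mu> t z * heat S L s z y)"
  unfolding distr_at_def
  by (simp add: heat_add[OF assms(1) _ assms(2)] sum_distrib_left sum_distrib_right mult.assoc)
     (rule sum.swap)

text \<open>Cauchy-Schwarz in each column:
  \<open>(\<Sum>\<^sub>x \<nu> x Q x y)\<^sup>2 \<le> (\<Sum>\<^sub>x \<nu> x\<^sup>2 Q x y / \<pi> x) (\<Sum>\<^sub>x \<pi> x Q x y)\<close>.\<close>

lemma weighted_sq_sum_kernel_le:
  fixes \<pi> \<nu> :: "'a \<Rightarrow> real" and Q :: "'a \<Rightarrow> 'a \<Rightarrow> real"
  assumes fin: "finite S" and pos: "\<And>x. x \<in> S \<Longrightarrow> 0 < \<pi> x"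
    and Q_nonneg: "\<And>x y. x \<in> S \<Longrightarrow> y \<in> S \<Longrightarrow> 0 \<le> Q x y"
    and rows: "\<And>x. x \<in> S \<Longrightarrow> (\<Sum>y\<in>S. Q x y) = r"
    and cols: "\<And>y. y \<in> S \<Longrightarrow> (\<Sum>x\<in>S. \<pi> x * Q x y) = c * \<pi> y"
  shows "(\<Sum>y\<in>S. (\<Sum>x\<in>S. \<nu> x * Q x y)\<^sup>2 / \<pi> y) \<le> r * c * (\<Sum>x\<in>S. (\<nu> x)\<^sup>2 / \<pi> x)"
proof -
  have column: "(\<Sum>x\<in>S. \<nu> x * Q x y)\<^sup>2 / \<pi> y \<le> c * (\<Sum>x\<in>S. (\<nu> x)\<^sup>2 / \<pi> x * Q x y)"
    if y: "y \<in> S" for y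
  proof -
    have "sqrt (Q x y / \<pi> x) * sqrt (\<pi> x * Q x y) = Q x y" if "x \<in> S" for x
      using pos[OF that] Q_nonneg[OF that y]
      by (simp add: real_sqrt_mult[symmetric] power2_eq_square[symmetric])
    then have "(\<Sum>x\<in>S. \<nu> x * Q x y)\<^sup>2 =
          (\<Sum>x\<in>S. (\<nu> x * sqrt (Q x y / \<pi> x)) * sqrt (\<pi> x * Q x y))\<^sup>2"
      by (simp add: mult.assoc)
    also have "\<dots> \<le> (\<Sum>x\<in>S. (\<nu> x * sqrt (Q x y / \<pi> x))\<^sup>2) * (\<Sum>x\<in>S. (sqrt (\<pi> x * Q x y))\<^sup>2)"
      by (rule Cauchy_Schwarz_ineq_sum)
    also have "\<dots> = (\<Sum>x\<in>S. (\<nu> x)\<^sup>2 / \<pi> x * Q x y) * (\<Sum>x\<in>S. \<pi> x * Q x y)"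
      using pos Q_nonneg[OF _ y]
      by (intro arg_cong2[where f = "(*)"] sum.cong refl) (simp_all add: power_mult_distrib less_imp_le)
    also have "\<dots> = (\<Sum>x\<in>S. (\<nu> x)\<^sup>2 / \<pi> x * Q x y) * (c * \<pi> y)"
      by (simp add: cols[OF y])
    finally show ?thesis
      using pos[OF y] by (simp add: divide_le_eq mult_ac)
  qed
  have "(\<Sum>y\<in>S. (\<Sum>x\<in>S. \<nu> x * Q x y)\<^sup>2 / \<pi> y) \<le> c * (\<Sum>y\<in>S. \<Sum>x\<in>S. (\<nu> x)\<^sup>2 / \<pi> x * Q x y)"
    using column by (simp add: sum_distrib_left sum_mono)
  also have "\<dots> = c * (\<Sum>x\<in>S. (\<nu> x)\<^sup>2 / \<pi> x * r)"
    using rows by (subst sum.swap, intro arg_cong[where f = "(*) c"] sum.cong refl)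
                  (simp add: sum_distrib_left[symmetric] sum_divide_distrib[symmetric])
  also have "\<dots> = r * c * (\<Sum>x\<in>S. (\<nu> x)\<^sup>2 / \<pi> x)"
    by (simp add: sum_distrib_left sum_divide_distrib mult_ac)
  finally show ?thesis .
qed

lemma chi2_dist_kernel_le:
  assumes "finite S" "\<And>x. x \<in> S \<Longrightarrow> 0 < \<pi> x"
    and "\<And>x y. x \<in> S \<Longrightarrow> y \<in> S \<Longrightarrow> 0 \<le> Q x y"
    and "\<And>x. x \<in> S \<Longrightarrow> (\<Sum>y\<in>S. Q x y) = r"
    and "\<And>y. y \<in> S \<Longrightarrow> (\<Sum>x\<in>S. \<pi> x * Q x y) = c * \<pi> y"
    and step: "\<And>y. y \<in> S \<Longrightarrow> \<nu>' y - \<pi> y = (\<Sum>x\<in>S. (\<nu> x - \<pi> x) * Q x y)"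
  shows "chi2_dist S \<pi> \<nu>' \<le> r * c * chi2_dist S \<pi> \<nu>"
  unfolding chi2_dist_def
  using weighted_sq_sum_kernel_le[OF assms(1-5), of "\<lambda>x. \<nu> x - \<pi> x"] by (simp add: step)

lemma chi2_dist_distr_at_antimono:
  assumes fc: "finite_chain \<mu> S L \<pi>" and "t \<le> s"
  shows "chi2_dist S \<pi> (distr_at S L \<mu> s) \<le> chi2_dist S \<pi> (distr_at S L \<mu> t)"
proof -
  have gen: "generator S L" and st: "stationary S L \<pi>" using finite_chainD[OF fc] by auto
  have "chi2_dist S \<pi> (distr_at S L \<mu> (t + (s - t))) \<le> 1 * 1 * chi2_dist S \<pi> (distr_at S L \<mu> t)"
  proof (rule chi2_dist_kernel_le[where Q = "heat S L (s - t)"])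
    fix y assume y: "y \<in> S"
    show "(\<Sum>x\<in>S. \<pi> x * heat S L (s - t) x y) = 1 * \<pi> y"
      using heat_stationary[OF gen st y] by simp
    show "distr_at S L \<mu> (t + (s - t)) y - \<pi> y =
          (\<Sum>x\<in>S. (distr_at S L \<mu> t x - \<pi> x) * heat S L (s - t) x y)"
      using distr_at_add[OF gen y, of \<mu> t "s - t"] heat_stationary[OF gen st y]
      by (simp add: left_diff_distrib sum_subtractf)
  qed (use finite_chainD[OF fc] \<open>t \<le> s\<close> heat_nonneg[OF gen] heat_row_sum[OF gen] in auto)
  then show ?thesis by simp
qed

lemma heat_ge_stationary:
  assumes fc: "finite_chain \<mu> S L \<pi>"
  obtains \<delta> where "0 < \<delta>" "\<delta> \<le> 1" "\<And>x y. x \<in> S \<Longrightarrow> y \<in> S \<Longrightarrow> \<delta> * \<pi> y \<le> heat S L 1 x y"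
proof -
  have gen: "generator S L" and irr: "irreducible_gen S L"
    using fc unfolding finite_chain_def by auto
  define R where "R = (\<lambda>(x, y). heat S L 1 x y / \<pi> y) ` (S \<times> S)"
  have R: "finite R" "R \<noteq> {}" "\<And>r. r \<in> R \<Longrightarrow> 0 < r"
    using finite_chainD[OF fc] heat_pos[OF gen irr] unfolding R_def by auto
  show ?thesis
  proof
    show "0 < min 1 (Min R)" "min 1 (Min R) \<le> 1"
      using R Min_in by auto
    fix x y assume "x \<in> S" "y \<in> S"
    then have "min 1 (Min R) \<le> heat S L 1 x y / \<pi> y"
      using R(1) by (intro min.coboundedI2 Min_le) (auto simp: R_def)
    then show "min 1 (Min R) * \<pi> y \<le> heat S L 1 x y"
      using finite_chainD(7)[OF fc \<open>y \<in> S\<close>] by (simp add: le_divide_eq)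
  qed
qed

text \<open>Doeblin's argument: subtracting the minorising part \<open>\<delta> \<pi>\<close> from the time-one kernel does
  not change the evolution of the signed measure \<open>\<nu>\<^sub>t - \<pi>\<close>, which has total mass zero, but
  lowers its row and column sums to \<open>1 - \<delta>\<close>.\<close>

lemma chi2_dist_distr_at_contraction:
  assumes fc: "finite_chain \<mu> S L \<pi>"
  obtains q where "0 \<le> q" "q < 1"
    "\<And>t. chi2_dist S \<pi> (distr_at S L \<mu> (t + 1)) \<le> q * chi2_dist S \<pi> (distr_at S L \<mu> t)"
proof -
  have gen: "generator S L" and st: "stationary S L \<pi>" using finite_chainD[OF fc] by auto
  obtain \<delta> where \<delta>: "0 < \<delta>" "\<delta> \<le> 1" "\<And>x y. x \<in> S \<Longrightarrow> y \<in> S \<Longrightarrow> \<delta> * \<pi> y \<le> heat S L 1 x y"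
    using heat_ge_stationary[OF fc] by blast
  define Q where "Q x y = heat S L 1 x y - \<delta> * \<pi> y" for x y
  have "chi2_dist S \<pi> (distr_at S L \<mu> (t + 1)) \<le> (1 - \<delta>) * (1 - \<delta>) * chi2_dist S \<pi> (distr_at S L \<mu> t)"
    for t
  proof (rule chi2_dist_kernel_le[where Q = Q])
    show "finite S" "\<And>x. x \<in> S \<Longrightarrow> 0 < \<pi> x"
      using finite_chainD[OF fc] by auto
    show "0 \<le> Q x y" if "x \<in> S" "y \<in> S" for x y
      using \<delta>(3)[OF that] by (simp add: Q_def)
    show "(\<Sum>y\<in>S. Q x y) = 1 - \<delta>" if "x \<in> S" for x
      using heat_row_sum[OF gen that] stationaryD(2)[OF st]
      by (simp add: Q_def sum_subtractf sum_distrib_left[symmetric])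
    fix y assume y: "y \<in> S"
    have "(\<Sum>x\<in>S. \<pi> x * Q x y) = (\<Sum>x\<in>S. \<pi> x * heat S L 1 x y) - (\<Sum>x\<in>S. \<pi> x) * (\<delta> * \<pi> y)"
      by (simp add: Q_def right_diff_distrib sum_subtractf sum_distrib_right)
    then show "(\<Sum>x\<in>S. \<pi> x * Q x y) = (1 - \<delta>) * \<pi> y"
      using heat_stationary[OF gen st y] stationaryD(2)[OF st] by (simp add: algebra_simps)
    have mass_zero: "(\<Sum>x\<in>S. distr_at S L \<mu> t x - \<pi> x) = 0"
      using sum_distr_at[OF fc] stationaryD(2)[OF st] by (simp add: sum_subtractf)
    show "distr_at S L \<mu> (t + 1) y - \<pi> y = (\<Sum>x\<in>S. (distr_at S L \<mu> t x - \<pi> x) * Q x y)"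
      using distr_at_add[OF gen y] heat_stationary[OF gen st y] mass_zero
      by (simp add: Q_def right_diff_distrib left_diff_distrib sum_subtractf
          sum_distrib_right[symmetric])
  qed
  moreover have "(1 - \<delta>) * (1 - \<delta>) < 1"
    using \<delta>(1,2) mult_left_le[of "1 - \<delta>" "1 - \<delta>"] by linarith
  ultimately show ?thesis
    using that[of "(1 - \<delta>) * (1 - \<delta>)"] by simp
qed

lemma chi2_dist_distr_at_tendsto_0:
  assumes fc: "finite_chain \<mu> S L \<pi>"
  shows "((\<lambda>t. chi2_dist S \<pi> (distr_at S L \<mu> t)) \<longlongrightarrow> 0) at_top"
proof -
  let ?E = "\<lambda>t. chi2_dist S \<pi> (distr_at S L \<mu> t)"
  have E_nonneg: "0 \<le> ?E t" for t
    by (rule chi2_dist_nonneg[OF finite_chainD(7)[OF fc]])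
  obtain q where q: "0 \<le> q" "q < 1" "\<And>t. ?E (t + 1) \<le> q * ?E t"
    using chi2_dist_distr_at_contraction[OF fc] by blast
  have geometric: "?E (real n) \<le> q ^ n * ?E 0" for n
  proof (induction n)
    case (Suc n)
    have "?E (real (Suc n)) \<le> q * ?E (real n)"
      using q(3)[of "real n"] by (simp add: add.commute)
    also have "\<dots> \<le> q * (q ^ n * ?E 0)"
      by (rule mult_left_mono[OF Suc q(1)])
    finally show ?case by simp
  qed simp
  show ?thesis
  proof (rule order_tendstoI)
    show "\<forall>\<^sub>F t in at_top. a < ?E t" if "a < 0" for a
      using that E_nonneg less_le_trans by (blast intro: always_eventually)
    fix \<epsilon> :: real assume "0 < \<epsilon>"
    have "(\<lambda>n. q ^ n * ?E 0) \<longlonglongrightarrow> 0"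
      using q by (intro tendsto_mult_left_zero LIMSEQ_power_zero) simp
    from order_tendstoD(2)[OF this \<open>0 < \<epsilon>\<close>]
    obtain n where n: "q ^ n * ?E 0 < \<epsilon>"
      by (auto simp: eventually_sequentially)
    show "\<forall>\<^sub>F t in at_top. ?E t < \<epsilon>"
      using eventually_ge_at_top[of "real n"]
    proof eventually_elim
      case (elim t)
      then have "?E t \<le> ?E (real n)" by (rule chi2_dist_distr_at_antimono[OF fc])
      then show ?case using geometric[of n] n by simp
    qed
  qed
qed

lemma d2_antimono:
  assumes "finite_chain \<mu> S L \<pi>" "t \<le> s"
  shows "d2 S L \<pi> \<mu> s \<le> d2 S L \<pi> \<mu> t"
  using d2_eq_sqrt_chi2_dist[of S \<pi>, OF finite_chainD(7)[OF assms(1)]] chi2_dist_distr_at_antimono[OF assms]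
  by (simp add: real_sqrt_le_mono)

lemma d2_tendsto_0:
  assumes "finite_chain \<mu> S L \<pi>"
  shows "((\<lambda>t. d2 S L \<pi> \<mu> t) \<longlongrightarrow> 0) at_top"
  using tendsto_real_sqrt[OF chi2_dist_distr_at_tendsto_0[OF assms]]
  by (simp add: d2_eq_sqrt_chi2_dist[of S \<pi>, OF finite_chainD(7)[OF assms]])

section \<open>Product chains\<close>

text \<open>The operator \<open>I \<otimes> \<dots> \<otimes> M \<otimes> \<dots> \<otimes> I\<close> acting on coordinate \<open>i\<close> of \<open>\<Pi>\<^sub>E i\<in>I. S i\<close>.\<close>

definition coord_lift :: "'i set \<Rightarrow> 'i \<Rightarrow> ('a \<Rightarrow> 'a \<Rightarrow> real) \<Rightarrow> ('i \<Rightarrow> 'a) \<Rightarrow> ('i \<Rightarrow> 'a) \<Rightarrow> real"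
  where "coord_lift I i M x y = (if \<forall>j\<in>I - {i}. x j = y j then M (x i) (y i) else 0)"

lemma PiE_eq_iff_coords: "x \<in> PiE I S \<Longrightarrow> y \<in> PiE I S \<Longrightarrow> (\<forall>k\<in>I. x k = y k) \<longleftrightarrow> x = y"
  by (auto simp: PiE_def extensional_def fun_eq_iff)

lemma sum_PiE_fun_upd:
  assumes x: "x \<in> PiE I S" and i: "i \<in> I" and fin: "finite (PiE I S)"
  shows "(\<Sum>z\<in>PiE I S. if \<forall>k\<in>I - {i}. x k = z k then g (z i) else 0) = (\<Sum>a\<in>S i. g a)"
proof -
  have "{z \<in> PiE I S. \<forall>k\<in>I - {i}. x k = z k} = (\<lambda>a. x(i := a)) ` S i"
  proof (intro equalityI subsetI)
    fix z assume z: "z \<in> {z \<in> PiE I S. \<forall>k\<in>I - {i}. x k = z k}"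
    have "z = x(i := z i)"
    proof
      fix k
      show "z k = (x(i := z i)) k"
        using z x by (cases "k = i"; cases "k \<in> I") (auto simp: PiE_def extensional_def)
    qed
    moreover have "z i \<in> S i" using z i by auto
    ultimately show "z \<in> (\<lambda>a. x(i := a)) ` S i" by blast
  qed (use x i in \<open>auto simp: PiE_def Pi_def extensional_def split: if_splits\<close>)
  moreover have "inj_on (\<lambda>a. x(i := a)) (S i)"
    by (rule inj_onI) (metis fun_upd_same)
  ultimately show ?thesis
    using fin by (simp add: sum.inter_filter[symmetric] sum.reindex)
qed

lemma sum_PiE_two_constraints:
  assumes x: "x \<in> PiE I S" and y: "y \<in> PiE I S" and i: "i \<in> I" "i \<notin> K"
    and fin: "finite (PiE I S)"
  shows "(\<Sum>z\<in>PiE I S. if (\<forall>k\<in>I - {i}. x k = z k) \<and> (\<forall>k\<in>I - K. z k = y k) then F z else 0)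
       = (if \<forall>k\<in>I - insert i K. x k = y k then F (x(i := y i)) else 0)"
proof -
  have "{z \<in> PiE I S. (\<forall>k\<in>I - {i}. x k = z k) \<and> (\<forall>k\<in>I - K. z k = y k)} =
        (if \<forall>k\<in>I - insert i K. x k = y k then {x(i := y i)} else {})"
  proof (intro equalityI subsetI)
    fix z assume z: "z \<in> {z \<in> PiE I S. (\<forall>k\<in>I - {i}. x k = z k) \<and> (\<forall>k\<in>I - K. z k = y k)}"
    have "z = x(i := y i)"
    proof
      fix k
      show "z k = (x(i := y i)) k"
        using z x i by (cases "k = i"; cases "k \<in> I") (auto simp: PiE_def extensional_def)
    qed
    moreover have "\<forall>k\<in>I - insert i K. x k = y k"
      using z by auto
    ultimately show "z \<in> (if \<forall>k\<in>I - insert i K. x k = y k then {x(i := y i)} else {})"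
      by simp
  qed (use x y i in \<open>auto simp: PiE_def Pi_def extensional_def split: if_splits\<close>)
  then show ?thesis
    using fin by (simp add: sum.inter_filter[symmetric])
qed

lemma mpow_coord_lift:
  assumes fin: "finite (PiE I S)" and i: "i \<in> I" and x: "x \<in> PiE I S" and y: "y \<in> PiE I S"
  shows "mpow (PiE I S) (coord_lift I i M) k x y = coord_lift I i (mpow (S i) M k) x y"
  using x
proof (induction k arbitrary: x)
  case 0
  have "(\<forall>j\<in>I - {i}. x j = y j) \<and> x i = y i \<longleftrightarrow> (\<forall>k\<in>I. x k = y k)"
    using i by auto
  then show ?case
    using PiE_eq_iff_coords[OF 0 y] by (auto simp: coord_lift_def)
next
  case (Suc k)
  have "mpow (PiE I S) (coord_lift I i M) (Suc k) x y =
        (\<Sum>z\<in>PiE I S. coord_lift I i M x z * coord_lift I i (mpow (S i) M k) z y)"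
    unfolding mpow.simps by (intro sum.cong refl) (simp add: Suc.IH)
  also have "\<dots> = coord_lift I i (mpow (S i) M (Suc k)) x y"
  proof (cases "\<forall>j\<in>I - {i}. x j = y j")
    case True
    have "(\<Sum>z\<in>PiE I S. coord_lift I i M x z * coord_lift I i (mpow (S i) M k) z y) =
          (\<Sum>z\<in>PiE I S. if \<forall>j\<in>I - {i}. x j = z j
                         then M (x i) (z i) * mpow (S i) M k (z i) (y i) else 0)"
      using True by (intro sum.cong refl) (auto simp: coord_lift_def)
    also have "\<dots> = (\<Sum>a\<in>S i. M (x i) a * mpow (S i) M k a (y i))"
      by (rule sum_PiE_fun_upd[OF Suc.prems i fin])
    finally show ?thesis
      using True by (simp add: coord_lift_def)
  next
    case False
    have "coord_lift I i N x y = 0" for N :: "'b \<Rightarrow> 'b \<Rightarrow> real"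
      unfolding coord_lift_def if_not_P[OF False] ..
    moreover have "coord_lift I i M x z * coord_lift I i (mpow (S i) M k) z y = 0" for z
      using False by (auto simp: coord_lift_def)
    ultimately show ?thesis
      by (simp add: sum.neutral del: mult_eq_0_iff)
  qed
  finally show ?case .
qed

lemma mat_exp_coord_lift:
  assumes "finite (PiE I S)" "i \<in> I" "x \<in> PiE I S" "y \<in> PiE I S"
  shows "mat_exp (PiE I S) (coord_lift I i M) x y = coord_lift I i (mat_exp (S i) M) x y"
proof (cases "\<forall>j\<in>I - {i}. x j = y j")
  case True
  then show ?thesis
    unfolding mat_exp_def mpow_coord_lift[OF assms] coord_lift_def if_P[OF True] by simp
next
  case False
  then show ?thesis
    unfolding mat_exp_def mpow_coord_lift[OF assms] coord_lift_def if_not_P[OF False] by simp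
qed

lemma mat_mult_coord_lift:
  assumes fin: "finite (PiE I S)" and "i \<in> I" "j \<in> I" "i \<noteq> j"
    and x: "x \<in> PiE I S" and y: "y \<in> PiE I S"
  shows "mat_mult (PiE I S) (coord_lift I i M) (coord_lift I j N) x y =
         (if \<forall>k\<in>I - {i, j}. x k = y k then M (x i) (y i) * N (x j) (y j) else 0)"
proof -
  have "mat_mult (PiE I S) (coord_lift I i M) (coord_lift I j N) x y =
        (\<Sum>z\<in>PiE I S. if (\<forall>k\<in>I - {i}. x k = z k) \<and> (\<forall>k\<in>I - {j}. z k = y k)
                       then M (x i) (z i) * N (z j) (y j) else 0)"
    unfolding mat_mult_def by (intro sum.cong refl) (auto simp: coord_lift_def)
  also have "\<dots> = (if \<forall>k\<in>I - {i, j}. x k = y k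
                   then M (x i) ((x(i := y i)) i) * N ((x(i := y i)) j) (y j) else 0)"
    using assms by (intro sum_PiE_two_constraints) auto
  finally show ?thesis using \<open>i \<noteq> j\<close> by simp
qed

lemma coord_lift_commute:
  assumes "finite (PiE I S)" "i \<in> I" "j \<in> I" "i \<noteq> j" "x \<in> PiE I S" "y \<in> PiE I S"
  shows "mat_mult (PiE I S) (coord_lift I i M) (coord_lift I j N) x y =
         mat_mult (PiE I S) (coord_lift I j N) (coord_lift I i M) x y"
  using assms by (simp add: mat_mult_coord_lift insert_commute mult.commute)

text \<open>Generators acting on distinct coordinates commute, so \<open>mat_exp_add\<close> splits off one
  coordinate at a time.\<close>

lemma mat_exp_sum_coord_lift:
  assumes fin: "finite (PiE I S)" and "finite J" "J \<subseteq> I"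
    and x: "x \<in> PiE I S" and y: "y \<in> PiE I S"
  shows "mat_exp (PiE I S) (\<lambda>u v. \<Sum>i\<in>J. coord_lift I i (Q i) u v) x y =
         (if \<forall>k\<in>I - J. x k = y k then \<Prod>i\<in>J. mat_exp (S i) (Q i) (x i) (y i) else 0)"
  using assms(2-5)
proof (induction J arbitrary: x y rule: finite_induct)
  case empty
  have "mat_exp (PiE I S) (\<lambda>u v. 0) x y = mat_exp (PiE I S) (scalar_mat 0) x y"
    by (simp add: scalar_mat_def[abs_def])
  also have "\<dots> = scalar_mat 1 x y"
    using mat_exp_scalar_mat[OF fin empty(2)] by simp
  finally show ?case
    using PiE_eq_iff_coords[OF empty(2,3)] by (simp add: scalar_mat_def)
next
  case (insert i J)
  let ?P = "PiE I S" and ?G = "\<lambda>u v. \<Sum>j\<in>J. coord_lift I j (Q j) u v"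
  have i: "i \<in> I" and JI: "J \<subseteq> I" using insert.prems by auto
  have "mat_exp ?P (\<lambda>u v. \<Sum>j\<in>insert i J. coord_lift I j (Q j) u v) x y =
        mat_exp ?P (\<lambda>u v. coord_lift I i (Q i) u v + ?G u v) x y"
    using insert.hyps by simp
  also have "\<dots> = mat_mult ?P (mat_exp ?P (coord_lift I i (Q i))) (mat_exp ?P ?G) x y"
  proof (rule mat_exp_add[OF fin _ insert.prems(2,3)])
    fix u v assume "u \<in> ?P" "v \<in> ?P"
    then show "mat_mult ?P (coord_lift I i (Q i)) ?G u v = mat_mult ?P ?G (coord_lift I i (Q i)) u v"
      using JI insert.hyps i
      by (simp add: mat_mult_sum_left mat_mult_sum_right)
         (intro sum.cong refl coord_lift_commute[OF fin], auto)
  qed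
  also have "\<dots> = (\<Sum>z\<in>?P. if (\<forall>k\<in>I - {i}. x k = z k) \<and> (\<forall>k\<in>I - J. z k = y k)
                  then mat_exp (S i) (Q i) (x i) (z i) * (\<Prod>j\<in>J. mat_exp (S j) (Q j) (z j) (y j))
                  else 0)"
    unfolding mat_mult_def
    using insert.IH[OF JI] insert.prems mat_exp_coord_lift[OF fin i insert.prems(2)]
    by (intro sum.cong refl) (auto simp: coord_lift_def)
  also have "\<dots> = (if \<forall>k\<in>I - insert i J. x k = y k
                  then mat_exp (S i) (Q i) (x i) (y i) *
                       (\<Prod>j\<in>J. mat_exp (S j) (Q j) ((x(i := y i)) j) (y j))
                  else 0)"
    by (subst sum_PiE_two_constraints[OF insert.prems(2,3) i insert.hyps(2) fin]) simp
  also have "\<dots> = (if \<forall>k\<in>I - insert i J. x k = y k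
                  then \<Prod>j\<in>insert i J. mat_exp (S j) (Q j) (x j) (y j) else 0)"
    using insert.hyps by (auto intro!: prod.cong)
  finally show ?case .
qed

lemma heat_prod_gen:
  assumes "finite I" "\<And>i. i \<in> I \<Longrightarrow> finite (S i)" "x \<in> PiE I S" "y \<in> PiE I S"
  shows "heat (PiE I S) (prod_gen I p L) t x y = (\<Prod>i\<in>I. heat (S i) (L i) (p i * t) (x i) (y i))"
proof -
  have "(\<lambda>u v. t * prod_gen I p L u v) = (\<lambda>u v. \<Sum>i\<in>I. coord_lift I i (\<lambda>a b. p i * t * L i a b) u v)"
    unfolding prod_gen_def coord_lift_def
    by (intro ext) (simp add: sum_distrib_left if_distrib mult_ac cong: if_cong)
  then show ?thesis
    using assms mat_exp_sum_coord_lift[of I S I x y]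
    by (simp add: heat_eq_mat_exp finite_PiE)
qed

lemma distr_at_prod_gen:
  assumes "finite I" "\<And>i. i \<in> I \<Longrightarrow> finite (S i)" "y \<in> PiE I S"
  shows "distr_at (PiE I S) (prod_gen I p L) (prod_distr I \<mu>) t y =
         (\<Prod>i\<in>I. distr_at (S i) (L i) (\<mu> i) (p i * t) (y i))"
proof -
  have "distr_at (PiE I S) (prod_gen I p L) (prod_distr I \<mu>) t y =
        (\<Sum>x\<in>PiE I S. \<Prod>i\<in>I. \<mu> i (x i) * heat (S i) (L i) (p i * t) (x i) (y i))"
    unfolding distr_at_def prod_distr_def
    using assms by (intro sum.cong refl) (simp add: heat_prod_gen prod.distrib)
  then show ?thesis
    using assms(1,2) by (simp add: distr_at_def prod_sum_PiE)
qed

lemma chi2_dist_eq_sum_sq: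
  assumes "\<And>y. y \<in> S \<Longrightarrow> 0 < \<pi> y" "(\<Sum>y\<in>S. \<pi> y) = 1" "(\<Sum>y\<in>S. \<nu> y) = 1"
  shows "1 + chi2_dist S \<pi> \<nu> = (\<Sum>y\<in>S. (\<nu> y)\<^sup>2 / \<pi> y)"
proof -
  have "chi2_dist S \<pi> \<nu> = (\<Sum>y\<in>S. (\<nu> y)\<^sup>2 / \<pi> y - 2 * \<nu> y + \<pi> y)"
    unfolding chi2_dist_def
  proof (intro sum.cong refl)
    fix y assume "y \<in> S"
    then have "\<pi> y \<noteq> 0" using assms(1) by fastforce
    then show "(\<nu> y - \<pi> y)\<^sup>2 / \<pi> y = (\<nu> y)\<^sup>2 / \<pi> y - 2 * \<nu> y + \<pi> y"
      by (simp add: field_simps power2_eq_square)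
  qed
  then show ?thesis
    using assms(2,3) by (simp add: sum.distrib sum_subtractf sum_distrib_left[symmetric])
qed

lemma chi2_dist_prod_distr:
  assumes "finite I" "\<And>i. i \<in> I \<Longrightarrow> finite (S i)"
    and \<pi>: "\<And>i y. i \<in> I \<Longrightarrow> y \<in> S i \<Longrightarrow> 0 < \<pi> i y" "\<And>i. i \<in> I \<Longrightarrow> (\<Sum>y\<in>S i. \<pi> i y) = 1"
    and \<nu>: "\<And>i. i \<in> I \<Longrightarrow> (\<Sum>y\<in>S i. \<nu> i y) = 1"
  shows "1 + chi2_dist (PiE I S) (prod_distr I \<pi>) (prod_distr I \<nu>) =
         (\<Prod>i\<in>I. 1 + chi2_dist (S i) (\<pi> i) (\<nu> i))"
proof -
  have "1 + chi2_dist (PiE I S) (prod_distr I \<pi>) (prod_distr I \<nu>) =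
        (\<Sum>y\<in>PiE I S. (prod_distr I \<nu> y)\<^sup>2 / prod_distr I \<pi> y)"
  proof (rule chi2_dist_eq_sum_sq)
    show "0 < prod_distr I \<pi> y" if "y \<in> PiE I S" for y
      using that \<pi>(1) by (auto simp: prod_distr_def intro!: prod_pos)
  qed (use assms in \<open>simp_all add: prod_distr_def prod_sum_PiE[symmetric]\<close>)
  also have "\<dots> = (\<Prod>i\<in>I. \<Sum>a\<in>S i. (\<nu> i a)\<^sup>2 / \<pi> i a)"
    using assms(1,2)
    by (simp add: prod_distr_def prod_sum_PiE prod_dividef prod_power_distrib)
  also have "\<dots> = (\<Prod>i\<in>I. 1 + chi2_dist (S i) (\<pi> i) (\<nu> i))"
    using assms by (intro prod.cong refl chi2_dist_eq_sum_sq[symmetric]) auto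
  finally show ?thesis .
qed

lemma d2_prod_chain:
  assumes "finite I" and fc: "\<And>i. i \<in> I \<Longrightarrow> finite_chain (\<mu> i) (S i) (L i) (\<pi> i)"
  shows "1 + (d2 (prod_space I S) (prod_gen I p L) (prod_distr I \<pi>) (prod_distr I \<mu>) t)\<^sup>2 =
         (\<Prod>i\<in>I. 1 + (d2 (S i) (L i) (\<pi> i) (\<mu> i) (p i * t))\<^sup>2)"
proof -
  have fin: "\<And>i. i \<in> I \<Longrightarrow> finite (S i)"
    and \<pi>_pos: "\<And>i y. i \<in> I \<Longrightarrow> y \<in> S i \<Longrightarrow> 0 < \<pi> i y"
    using finite_chainD(3,7)[OF fc] by auto
  let ?\<nu> = "\<lambda>i. distr_at (S i) (L i) (\<mu> i) (p i * t)"
  have "0 < prod_distr I \<pi> y" if "y \<in> PiE I S" for y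
    using that \<pi>_pos by (auto simp: prod_distr_def intro!: prod_pos)
  then have "(d2 (PiE I S) (prod_gen I p L) (prod_distr I \<pi>) (prod_distr I \<mu>) t)\<^sup>2 =
             chi2_dist (PiE I S) (prod_distr I \<pi>)
               (distr_at (PiE I S) (prod_gen I p L) (prod_distr I \<mu>) t)"
    by (rule d2_sq)
  also have "\<dots> = chi2_dist (PiE I S) (prod_distr I \<pi>) (prod_distr I ?\<nu>)"
    unfolding chi2_dist_def
    by (intro sum.cong refl) (simp add: distr_at_prod_gen[OF \<open>finite I\<close> fin] prod_distr_def)
  finally have "1 + (d2 (prod_space I S) (prod_gen I p L) (prod_distr I \<pi>) (prod_distr I \<mu>) t)\<^sup>2 =
             1 + chi2_dist (PiE I S) (prod_distr I \<pi>) (prod_distr I ?\<nu>)"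
    by (simp add: prod_space_def)
  also have "\<dots> = (\<Prod>i\<in>I. 1 + chi2_dist (S i) (\<pi> i) (?\<nu> i))"
    using \<open>finite I\<close> fin \<pi>_pos stationaryD(2)[OF finite_chainD(2)[OF fc]] sum_distr_at[OF fc]
    by (intro chi2_dist_prod_distr) auto
  also have "\<dots> = (\<Prod>i\<in>I. 1 + (d2 (S i) (L i) (\<pi> i) (\<mu> i) (p i * t))\<^sup>2)"
    using \<pi>_pos by (intro prod.cong refl) (simp add: d2_sq)
  finally show ?thesis .
qed

section \<open>From the product formula to cutoff\<close>

lemma one_plus_sum_le_prod:
  fixes a :: "'i \<Rightarrow> real"
  assumes "\<And>i. i \<in> I \<Longrightarrow> 0 \<le> a i"
  shows "1 + (\<Sum>i\<in>I. a i) \<le> (\<Prod>i\<in>I. 1 + a i)"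
  using assms
proof (induction I rule: infinite_finite_induct)
  case (insert i I)
  have "1 + (\<Sum>j\<in>insert i I. a j) \<le> (1 + a i) * (1 + (\<Sum>j\<in>I. a j))"
    using insert by (simp add: algebra_simps sum_nonneg)
  also have "\<dots> \<le> (1 + a i) * (\<Prod>j\<in>I. 1 + a j)"
    using insert by (intro mult_left_mono) auto
  finally show ?case using insert.hyps by simp
qed simp_all

lemma d2_prod_chain_bounds:
  fixes p :: "nat \<Rightarrow> real" and t :: real
  assumes "finite I" and fc: "\<And>i. i \<in> I \<Longrightarrow> finite_chain (\<mu> i) (S i) (L i) (\<pi> i)"
  defines "d \<equiv> d2 (prod_space I S) (prod_gen I p L) (prod_distr I \<pi>) (prod_distr I \<mu>) t"
    and "D \<equiv> \<Sum>i\<in>I. (d2 (S i) (L i) (\<pi> i) (\<mu> i) (p i * t))\<^sup>2"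
  shows "0 \<le> d" "D \<le> d\<^sup>2" "1 + d\<^sup>2 \<le> exp D"
proof -
  have "0 \<le> prod_distr I \<pi> y" if "y \<in> prod_space I S" for y
    using that less_imp_le[OF finite_chainD(7)[OF fc]]
    by (auto simp: prod_space_def prod_distr_def intro!: prod_nonneg)
  then show "0 \<le> d" unfolding d_def by (rule d2_nonneg)
  have prod: "1 + d\<^sup>2 = (\<Prod>i\<in>I. 1 + (d2 (S i) (L i) (\<pi> i) (\<mu> i) (p i * t))\<^sup>2)"
    unfolding d_def by (rule d2_prod_chain[OF assms(1) fc])
  have "1 + D \<le> 1 + d\<^sup>2"
    unfolding D_def prod by (rule one_plus_sum_le_prod) simp
  then show "D \<le> d\<^sup>2" by simp
  show "1 + d\<^sup>2 \<le> exp D"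
    unfolding D_def prod by (rule prod_le_exp_sum) simp
qed

lemma sum_sq_d2_antimono:
  assumes fc: "\<And>i. i \<in> I \<Longrightarrow> finite_chain (\<mu> i) (S i) (L i) (\<pi> i)"
    and p: "\<And>i. i \<in> I \<Longrightarrow> 0 < p i"
  shows "antimono (\<lambda>t. \<Sum>i\<in>I. (d2 (S i) (L i) (\<pi> i) (\<mu> i) (p i * t))\<^sup>2)"
proof (rule antimonoI, rule sum_mono)
  fix t s :: real and i assume "t \<le> s" "i \<in> I"
  then have "d2 (S i) (L i) (\<pi> i) (\<mu> i) (p i * s) \<le> d2 (S i) (L i) (\<pi> i) (\<mu> i) (p i * t)"
    using p by (intro d2_antimono fc) auto
  moreover have "0 \<le> d2 (S i) (L i) (\<pi> i) (\<mu> i) (p i * s)"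
    using \<open>i \<in> I\<close> less_imp_le[OF finite_chainD(7)[OF fc]] by (intro d2_nonneg) auto
  ultimately show "(d2 (S i) (L i) (\<pi> i) (\<mu> i) (p i * s))\<^sup>2 \<le> (d2 (S i) (L i) (\<pi> i) (\<mu> i) (p i * t))\<^sup>2"
    by (rule power_mono)
qed

lemma sum_sq_d2_tendsto_0:
  assumes fc: "\<And>i. i \<in> I \<Longrightarrow> finite_chain (\<mu> i) (S i) (L i) (\<pi> i)"
    and p: "\<And>i. i \<in> I \<Longrightarrow> 0 < p i"
  shows "((\<lambda>t. \<Sum>i\<in>I. (d2 (S i) (L i) (\<pi> i) (\<mu> i) (p i * t))\<^sup>2) \<longlongrightarrow> 0) at_top"
proof (rule tendsto_null_sum)
  fix i assume "i \<in> I"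
  have "filterlim (\<lambda>t. p i * t) at_top at_top"
    using p[OF \<open>i \<in> I\<close>] by (rule filterlim_tendsto_pos_mult_at_top[OF tendsto_const _ filterlim_ident])
  from filterlim_compose[OF d2_tendsto_0[OF fc[OF \<open>i \<in> I\<close>]] this]
  show "((\<lambda>t. (d2 (S i) (L i) (\<pi> i) (\<mu> i) (p i * t))\<^sup>2) \<longlongrightarrow> 0) at_top"
    by (auto intro: tendsto_null_power)
qed

text \<open>In the names below, \<open>chi2_bounds\<close> refers to the hypotheses \<open>D \<le> d\<^sup>2\<close> and
  \<open>1 + d\<^sup>2 \<le> exp D\<close>, which \<open>d2_prod_chain_bounds\<close> establishes for the product chain.\<close>

lemma tendsto_0_iff_of_chi2_bounds:
  fixes d D :: "'a \<Rightarrow> real"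
  assumes "\<forall>\<^sub>F x in F. 0 \<le> d x \<and> D x \<le> (d x)\<^sup>2 \<and> 1 + (d x)\<^sup>2 \<le> exp (D x)"
  shows "(d \<longlongrightarrow> 0) F \<longleftrightarrow> (D \<longlongrightarrow> 0) F"
proof
  assume "(d \<longlongrightarrow> 0) F"
  then have d_sq: "((\<lambda>x. (d x)\<^sup>2) \<longlongrightarrow> 0) F" by (rule tendsto_null_power) simp
  have "\<forall>\<^sub>F x in F. 0 \<le> D x \<and> D x \<le> (d x)\<^sup>2"
    using assms
  proof eventually_elim
    case (elim x)
    then have "1 \<le> exp (D x)"
      using zero_le_power2[of "d x"] by linarith
    then show ?case using elim by simp
  qed
  then have "\<forall>\<^sub>F x in F. 0 \<le> D x" "\<forall>\<^sub>F x in F. D x \<le> (d x)\<^sup>2"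
    by (simp_all add: eventually_conj_iff)
  from tendsto_sandwich[OF this tendsto_const d_sq] show "(D \<longlongrightarrow> 0) F" .
next
  assume "(D \<longlongrightarrow> 0) F"
  then have "((\<lambda>x. sqrt (exp (D x) - 1)) \<longlongrightarrow> sqrt (exp 0 - 1)) F"
    by (intro tendsto_intros)
  then have bound: "((\<lambda>x. sqrt (exp (D x) - 1)) \<longlongrightarrow> 0) F"
    by simp
  have "\<forall>\<^sub>F x in F. 0 \<le> d x \<and> d x \<le> sqrt (exp (D x) - 1)"
    using assms
  proof eventually_elim
    case (elim x)
    then have "(d x)\<^sup>2 \<le> exp (D x) - 1" by linarith
    then show ?case using elim by (simp add: real_le_rsqrt)
  qed
  then have "\<forall>\<^sub>F x in F. 0 \<le> d x" "\<forall>\<^sub>F x in F. d x \<le> sqrt (exp (D x) - 1)"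
    by (simp_all add: eventually_conj_iff)
  from tendsto_sandwich[OF this tendsto_const bound] show "(d \<longlongrightarrow> 0) F" .
qed

lemma filterlim_at_top_iff_of_chi2_bounds:
  fixes d D :: "'a \<Rightarrow> real"
  assumes "\<forall>\<^sub>F x in F. 0 \<le> d x \<and> D x \<le> (d x)\<^sup>2 \<and> 1 + (d x)\<^sup>2 \<le> exp (D x)"
  shows "filterlim d at_top F \<longleftrightarrow> filterlim D at_top F"
proof
  assume "filterlim d at_top F"
  then have "filterlim (\<lambda>x. (d x)\<^sup>2) at_top F"
    by (rule filterlim_pow_at_top[rotated]) simp
  then have "filterlim (\<lambda>x. 1 + (d x)\<^sup>2) at_top F"
    by (rule filterlim_tendsto_add_at_top[OF tendsto_const])
  then have "filterlim (\<lambda>x. ln (1 + (d x)\<^sup>2)) at_top F"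
    by (rule filterlim_compose[OF ln_at_top])
  moreover have "\<forall>\<^sub>F x in F. ln (1 + (d x)\<^sup>2) \<le> D x"
    using assms
  proof eventually_elim
    case (elim x)
    then have "ln (1 + (d x)\<^sup>2) \<le> ln (exp (D x))"
      by (intro ln_mono) (auto intro: add_pos_nonneg)
    then show ?case by simp
  qed
  ultimately show "filterlim D at_top F"
    by (rule filterlim_at_top_mono)
next
  assume "filterlim D at_top F"
  then have "filterlim (\<lambda>x. sqrt (D x)) at_top F"
    by (rule filterlim_compose[OF sqrt_at_top])
  moreover have "\<forall>\<^sub>F x in F. sqrt (D x) \<le> d x"
    using assms by eventually_elim (simp add: real_le_lsqrt)
  ultimately show "filterlim d at_top F"
    by (rule filterlim_at_top_mono)
qed

text \<open>Monotonicity covers the multiples \<open>a t\<^sub>n\<close> with \<open>a \<ge> 2\<close>, which the window \<open>(1 \<plusminus> a) t\<^sub>n\<close>,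
  \<open>0 < a < 1\<close>, does not reach.\<close>

lemma cutoff_window_iff:
  fixes D :: "nat \<Rightarrow> real \<Rightarrow> real" and tn :: "nat \<Rightarrow> real"
  assumes tn: "\<And>n. 0 < tn n"
    and D: "\<forall>\<^sub>F n in sequentially. antimono (D n) \<and> (\<forall>t. 0 \<le> D n t)"
  shows "(\<forall>a. 0 < a \<and> a < 1 \<longrightarrow> ((\<lambda>n. D n ((1 + a) * tn n)) \<longlonglongrightarrow> 0) \<and>
                            filterlim (\<lambda>n. D n ((1 - a) * tn n)) at_top sequentially) \<longleftrightarrow>
         (\<forall>a>0. (1 < a \<longrightarrow> (\<lambda>n. D n (a * tn n)) \<longlonglongrightarrow> 0) \<and>
                (a < 1 \<longrightarrow> filterlim (\<lambda>n. D n (a * tn n)) at_top sequentially))"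
    (is "?window \<longleftrightarrow> ?multiples")
proof
  assume window: ?window
  show ?multiples
  proof (intro allI impI conjI)
    fix a :: real assume "0 < a" "1 < a"
    define b where "b = min a (3 / 2)"
    have b: "1 < b" "b \<le> a" "b < 2" using \<open>1 < a\<close> by (auto simp: b_def)
    have lim: "(\<lambda>n. D n (b * tn n)) \<longlonglongrightarrow> 0"
      using window[rule_format, of "b - 1"] b by simp
    have "\<forall>\<^sub>F n in sequentially. 0 \<le> D n (a * tn n) \<and> D n (a * tn n) \<le> D n (b * tn n)"
      using D
    proof eventually_elim
      case (elim n)
      have "b * tn n \<le> a * tn n" using tn[of n] b by (intro mult_right_mono) auto
      then show ?case using elim antimonoD by blast
    qed
    then have "\<forall>\<^sub>F n in sequentially. 0 \<le> D n (a * tn n)"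
      and "\<forall>\<^sub>F n in sequentially. D n (a * tn n) \<le> D n (b * tn n)"
      by (simp_all add: eventually_conj_iff)
    from tendsto_sandwich[OF this tendsto_const lim] show "(\<lambda>n. D n (a * tn n)) \<longlonglongrightarrow> 0" .
  next
    fix a :: real assume "0 < a" "a < 1"
    then show "filterlim (\<lambda>n. D n (a * tn n)) at_top sequentially"
      using window[rule_format, of "1 - a"] by simp
  qed
next
  assume multiples: ?multiples
  show ?window
  proof (intro allI impI conjI)
    fix a :: real assume "0 < a \<and> a < 1"
    then show "(\<lambda>n. D n ((1 + a) * tn n)) \<longlonglongrightarrow> 0"
      and "filterlim (\<lambda>n. D n ((1 - a) * tn n)) at_top sequentially"
      using multiples[rule_format, of "1 + a"] multiples[rule_format, of "1 - a"] by auto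
  qed
qed

lemma L2_cutoff_iff_of_chi2_bounds:
  fixes d D :: "nat \<Rightarrow> real \<Rightarrow> real"
  assumes bounds: "\<forall>\<^sub>F n in sequentially.
                     \<forall>t. 0 \<le> d n t \<and> D n t \<le> (d n t)\<^sup>2 \<and> 1 + (d n t)\<^sup>2 \<le> exp (D n t)"
    and anti: "\<forall>\<^sub>F n in sequentially. antimono (D n)"
  shows "L2_cutoff d \<longleftrightarrow>
         (\<exists>tn. (\<forall>n. 0 < tn n) \<and>
            (\<forall>a>0. (1 < a \<longrightarrow> (\<lambda>n. D n (a * tn n)) \<longlonglongrightarrow> 0) \<and>
                   (a < 1 \<longrightarrow> filterlim (\<lambda>n. D n (a * tn n)) at_top sequentially)))"
proof -
  have bounds_at: "\<forall>\<^sub>F n in sequentially.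
    0 \<le> d n (g n) \<and> D n (g n) \<le> (d n (g n))\<^sup>2 \<and> 1 + (d n (g n))\<^sup>2 \<le> exp (D n (g n))" for g
    using bounds by eventually_elim blast
  have "\<forall>\<^sub>F n in sequentially. antimono (D n) \<and> (\<forall>t. 0 \<le> D n t)"
    using bounds anti
  proof eventually_elim
    case (elim n)
    have "1 \<le> exp (D n t)" for t
      using elim(1)[THEN spec, of t] zero_le_power2[of "d n t"] by linarith
    then have "0 \<le> D n t" for t by simp
    then show ?case using elim by blast
  qed
  note window_iff = cutoff_window_iff[OF _ this]
  show ?thesis
    unfolding L2_cutoff_def
      tendsto_0_iff_of_chi2_bounds[OF bounds_at] filterlim_at_top_iff_of_chi2_bounds[OF bounds_at]
    using window_iff by (intro ex_cong1 conj_cong refl) blast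
qed

lemma mix_time_le_of_subset:
  assumes "{t. 0 \<le> t \<and> g t \<le> \<delta>} \<noteq> {}"
    and "\<And>t. 0 \<le> t \<Longrightarrow> g t \<le> \<delta> \<Longrightarrow> f t \<le> \<epsilon>"
  shows "mix_time f \<epsilon> \<le> mix_time g \<delta>"
  unfolding mix_time_def
  using assms by (intro cInf_superset_mono bdd_belowI[of _ 0]) auto

lemma mix_time_bounds_of_chi2_bounds:
  fixes d D :: "real \<Rightarrow> real"
  assumes bounds: "\<And>t. 0 \<le> d t \<and> D t \<le> (d t)\<^sup>2 \<and> 1 + (d t)\<^sup>2 \<le> exp (D t)"
    and lim: "(D \<longlongrightarrow> 0) at_top" and "0 < \<epsilon>"
  shows "mix_time d (sqrt (exp \<epsilon> - 1)) \<le> mix_time D \<epsilon>"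
    and "mix_time D \<epsilon> \<le> mix_time d (sqrt \<epsilon>)"
proof -
  have small: "\<exists>t\<ge>0. D t \<le> \<delta>" if "0 < \<delta>" for \<delta>
  proof -
    obtain T where "\<And>t. T \<le> t \<Longrightarrow> D t < \<delta>"
      using order_tendstoD(2)[OF lim \<open>0 < \<delta>\<close>] by (auto simp: eventually_at_top_linorder)
    then show ?thesis by (intro exI[of _ "max T 0"]) (auto intro: less_imp_le)
  qed
  show "mix_time d (sqrt (exp \<epsilon> - 1)) \<le> mix_time D \<epsilon>"
  proof (rule mix_time_le_of_subset)
    show "{t. 0 \<le> t \<and> D t \<le> \<epsilon>} \<noteq> {}" using small[OF \<open>0 < \<epsilon>\<close>] by auto
    show "d t \<le> sqrt (exp \<epsilon> - 1)" if "D t \<le> \<epsilon>" for t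
      using bounds[of t] exp_mono[OF that] by (intro real_le_rsqrt) linarith
  qed
  show "mix_time D \<epsilon> \<le> mix_time d (sqrt \<epsilon>)"
  proof (rule mix_time_le_of_subset)
    have "0 < ln (1 + \<epsilon>)" using \<open>0 < \<epsilon>\<close> by simp
    then obtain t where "0 \<le> t" "D t \<le> ln (1 + \<epsilon>)"
      using small by blast
    then have "d t \<le> sqrt \<epsilon>"
      using bounds[of t] \<open>0 < \<epsilon>\<close> exp_le_cancel_iff[of "D t" "ln (1 + \<epsilon>)"]
      by (intro real_le_rsqrt) simp
    then show "{t. 0 \<le> t \<and> d t \<le> sqrt \<epsilon>} \<noteq> {}" using \<open>0 \<le> t\<close> by auto
    show "D t \<le> \<epsilon>" if "d t \<le> sqrt \<epsilon>" for t
      using bounds[of t] that \<open>0 < \<epsilon>\<close> power_mono[OF that, of 2] by simp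
  qed
qed

theorem proposition4p1:
  fixes ell :: "nat \<Rightarrow> nat"
    and S :: "nat \<Rightarrow> nat \<Rightarrow> 'a set"
    and L :: "nat \<Rightarrow> nat \<Rightarrow> 'a \<Rightarrow> 'a \<Rightarrow> real"
    and \<mu> \<pi> :: "nat \<Rightarrow> nat \<Rightarrow> 'a \<Rightarrow> real"
    and p :: "nat \<Rightarrow> nat \<Rightarrow> real"
  assumes chains: "\<And>n i. 1 \<le> n \<Longrightarrow> i \<in> {1..ell n} \<Longrightarrow>
              finite_chain (\<mu> n i) (S n i) (L n i) (\<pi> n i)"
    and p_pos: "\<And>n i. 1 \<le> n \<Longrightarrow> i \<in> {1..ell n} \<Longrightarrow> 0 < p n i"
    and p_sum: "\<And>n. 1 \<le> n \<Longrightarrow> (\<Sum>i\<in>{1..ell n}. p n i) \<le> 1"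
  defines "dn \<equiv> \<lambda>n t. d2 (prod_space {1..ell n} (S n)) (prod_gen {1..ell n} (p n) (L n))
                         (prod_distr {1..ell n} (\<pi> n)) (prod_distr {1..ell n} (\<mu> n)) t"
    and "D \<equiv> \<lambda>n t. (\<Sum>i\<in>{1..ell n}. (d2 (S n i) (L n i) (\<pi> n i) (\<mu> n i) (p n i * t))\<^sup>2)"
  shows "(L2_cutoff dn \<longleftrightarrow>
           (\<exists>tn :: nat \<Rightarrow> real. (\<forall>n. 0 < tn n) \<and>
              (\<forall>a>0. (1 < a \<longrightarrow> ((\<lambda>n. D n (a * tn n)) \<longlonglongrightarrow> 0)) \<and>
                     (a < 1 \<longrightarrow> filterlim (\<lambda>n. D n (a * tn n)) at_top sequentially))))
       \<and> (\<forall>n\<ge>1. \<forall>\<epsilon>>0.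
             mix_time (dn n) (sqrt (exp \<epsilon> - 1)) \<le> mix_time (D n) \<epsilon> \<and>
             mix_time (D n) \<epsilon> \<le> mix_time (dn n) (sqrt \<epsilon>))"
proof -
  have bounds: "0 \<le> dn n t \<and> D n t \<le> (dn n t)\<^sup>2 \<and> 1 + (dn n t)\<^sup>2 \<le> exp (D n t)"
    if "1 \<le> n" for n t
    unfolding dn_def D_def
    using d2_prod_chain_bounds[where I = "{1..ell n}" and S = "S n" and L = "L n" and \<mu> = "\<mu> n"
        and \<pi> = "\<pi> n" and p = "p n" and t = t, OF _ chains[OF that]]
    by simp
  have anti: "antimono (D n)" and lim: "(D n \<longlongrightarrow> 0) at_top" if "1 \<le> n" for n
    unfolding D_def
    using sum_sq_d2_antimono[where I = "{1..ell n}" and S = "S n" and L = "L n" and \<mu> = "\<mu> n"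
        and \<pi> = "\<pi> n" and p = "p n", OF chains[OF that] p_pos[OF that]]
      sum_sq_d2_tendsto_0[where I = "{1..ell n}" and S = "S n" and L = "L n" and \<mu> = "\<mu> n"
        and \<pi> = "\<pi> n" and p = "p n", OF chains[OF that] p_pos[OF that]]
    by simp_all
  have "L2_cutoff dn \<longleftrightarrow>
           (\<exists>tn :: nat \<Rightarrow> real. (\<forall>n. 0 < tn n) \<and>
              (\<forall>a>0. (1 < a \<longrightarrow> ((\<lambda>n. D n (a * tn n)) \<longlonglongrightarrow> 0)) \<and>
                     (a < 1 \<longrightarrow> filterlim (\<lambda>n. D n (a * tn n)) at_top sequentially)))"
    by (rule L2_cutoff_iff_of_chi2_bounds; rule eventually_sequentiallyI[of 1])
       (simp_all add: bounds anti)
  moreover have "mix_time (dn n) (sqrt (exp \<epsilon> - 1)) \<le> mix_time (D n) \<epsilon> \<and>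
                 mix_time (D n) \<epsilon> \<le> mix_time (dn n) (sqrt \<epsilon>)" if "1 \<le> n" "0 < \<epsilon>" for n \<epsilon>
    using mix_time_bounds_of_chi2_bounds[OF bounds[OF that(1)] lim[OF that(1)] that(2)] by simp
  ultimately show ?thesis by simp
qed

end
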